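(* Let $\vec{G}$ be a DDMOG of order $n$ with DDM labeling $g$, its vertices indexed $v_1,\dots,v_n$ so that $g(v_i)=i$. Then for every integer $\ell$ with $1\le\ell\le n/2$ there exists a labeling $h$ of $\ell\vec{C_4}$ (taken vertex-disjoint from $\vec{G}$) for which the weighted sum $\vec{G}\oplus_{wt_h}^0\ell\vec{C_4}$ is defined and is a DDMOG.
   Context: An oriented graph is a finite digraph without loops such that whenever $(u,v)$ is an arc, $(v,u)$ is not. For a vertex $v$, $N^+(v)=\{x:(x,v)\text{ is an arc}\}$, $N^-(v)=\{x:(v,x)\text{ is an arc}\}$; for a labeling $f$, $wt_f(v)=\sum_{x\in N^+(v)}f(x)-\sum_{x\in N^-(v)}f(x)$. A DDM labeling of an oriented graph on $n$ vertices is a bijection $f:V\to\{1,\dots,n\}$ with $wt_f(v)=0$ for all $v$; a DDMOG is an oriented graph admitting one. $\ell\vec{C_4}$ denotes the oriented graph consisting of $\ell$ vertex-disjoint directed 4-cycles, the $i$-th having vertices $v_{i1},v_{i2},v_{i3},v_{i4}$ and arcs $(v_{i1},v_{i2}),(v_{i2},v_{i3}),(v_{i3},v_{i4}),(v_{i4},v_{i1})$. For an oriented graph $\vec{H}$ with labeling $h$ and integer $j$, $V_h^{j}(\vec{H})=\{u:wt_h(u)=j\}$. Weighted sum: let $\vec{G}$ have vertices $v_1,\dots,v_n$ (indexed by a labeling $g$ with $g(v_i)=i$), $s\in\mathbb{Z}$, and $\vec{H}$ (vertex-disjoint from $\vec{G}$) have a labeling $h:V(\vec{H})\to\mathbb{Z}^+$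 with $\{|wt_h(u)|:u\in V(\vec{H})\}\subseteq\{0\}\cup\{i+s:1\le i\le n\}$; then $\vec{G}\oplus_{wt_h}^s\vec{H}$ has vertex set $V(\vec{G})\cup V(\vec{H})$ and arc set $E(\vec{G})\cup E(\vec{H})\cup\bigcup_{i=1}^n(E^i\cup E^{-i})$, where $E^i=\{(v_i,u):u\in V_h^{-i-s}(\vec{H})\}$ and $E^{-i}=\{(u,v_i):u\in V_h^{i+s}(\vec{H})\}$. *)

theory Defs
  imports Main
begin

definition oriented_graph :: "'a set \<Rightarrow> ('a \<times> 'a) set \<Rightarrow> bool" where
  "oriented_graph V E \<longleftrightarrow> finite V \<and> E \<subseteq> V \<times> V \<and> (\<forall>v. (v, v) \<notin> E)
     \<and> (\<forall>u v. (u, v) \<in> E \<longrightarrow> (v, u) \<notin> E)"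

text \<open>N+(v) = in-neighbours, N-(v) = out-neighbours.\<close>
definition in_nbrs :: "'a set \<Rightarrow> ('a \<times> 'a) set \<Rightarrow> 'a \<Rightarrow> 'a set" where
  "in_nbrs V E v = {x \<in> V. (x, v) \<in> E}"

definition out_nbrs :: "'a set \<Rightarrow> ('a \<times> 'a) set \<Rightarrow> 'a \<Rightarrow> 'a set" where
  "out_nbrs V E v = {x \<in> V. (v, x) \<in> E}"

definition wt :: "'a set \<Rightarrow> ('a \<times> 'a) set \<Rightarrow> ('a \<Rightarrow> int) \<Rightarrow> 'a \<Rightarrow> int" where
  "wt V E f v = (\<Sum>x\<in>in_nbrs V E v. f x) - (\<Sum>x\<in>out_nbrs V E v. f x)"

definition DDM_labeling :: "'a set \<Rightarrow> ('a \<times> 'a) set \<Rightarrow> ('a \<Rightarrow> int) \<Rightarrow> bool" where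
  "DDM_labeling V E f \<longleftrightarrow> bij_betw f V {1..int (card V)} \<and> (\<forall>v\<in>V. wt V E f v = 0)"

definition DDMOG :: "'a set \<Rightarrow> ('a \<times> 'a) set \<Rightarrow> bool" where
  "DDMOG V E \<longleftrightarrow> oriented_graph V E \<and> (\<exists>f. DDM_labeling V E f)"

text \<open>l disjoint directed 4-cycles; vertex v_ij is (i,j), 1 <= i <= l, 1 <= j <= 4.\<close>
definition C4s_vertices :: "nat \<Rightarrow> (nat \<times> nat) set" where
  "C4s_vertices l = {1..l} \<times> {1..4}"

definition C4s_arcs :: "nat \<Rightarrow> ((nat \<times> nat) \<times> (nat \<times> nat)) set" where
  "C4s_arcs l = {((i, j), (i, j mod 4 + 1)) | i j. i \<in> {1..l} \<and> j \<in> {1..4}}"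

text \<open>Side conditions under which the weighted sum G \<oplus>^s_{wt_h} H is defined:
  g indexes the vertices of G as v_1..v_n (g(v_i) = i), h takes positive integer values
  on V(H), and every |wt_h(u)| lies in {0} \<union> {i+s : 1 \<le> i \<le> n}.\<close>
definition weighted_sum_defined ::
  "'a set \<Rightarrow> ('a \<Rightarrow> int) \<Rightarrow> int \<Rightarrow> 'b set \<Rightarrow> ('b \<times> 'b) set \<Rightarrow> ('b \<Rightarrow> int) \<Rightarrow> bool" where
  "weighted_sum_defined V g s VH EH h \<longleftrightarrow>
     bij_betw g V {1..int (card V)} \<and> (\<forall>u\<in>VH. h u > 0) \<and>
     (\<forall>u\<in>VH. \<bar>wt VH EH h u\<bar> \<in> {0} \<union> {i + s | i. 1 \<le> i \<and> i \<le> int (card V)})"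

definition wsum_vertices :: "'a set \<Rightarrow> 'b set \<Rightarrow> ('a + 'b) set" where
  "wsum_vertices V VH = Inl ` V \<union> Inr ` VH"

definition wsum_arcs ::
  "'a set \<Rightarrow> ('a \<times> 'a) set \<Rightarrow> ('a \<Rightarrow> int) \<Rightarrow> int \<Rightarrow> 'b set \<Rightarrow> ('b \<times> 'b) set \<Rightarrow> ('b \<Rightarrow> int)
    \<Rightarrow> (('a + 'b) \<times> ('a + 'b)) set" where
  "wsum_arcs V E g s VH EH h =
     map_prod Inl Inl ` E \<union> map_prod Inr Inr ` EH
     \<union> {(Inl v, Inr u) | v u. v \<in> V \<and> u \<in> VH \<and> wt VH EH h u = - g v - s}
     \<union> {(Inr u, Inl v) | v u. v \<in> V \<and> u \<in> VH \<and> wt VH EH h u = g v + s}"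

end

theory Submission
  imports Defs
begin

(* For s = 0, a vertex u of H with wt_h(u) = w <> 0 is joined to v_|w|, and in the direction in
   which the label g(v_|w|) = |w| cancels w; hence every vertex of H is balanced in the weighted
   sum. The vertex v_i of G gains the label sum of V_h^i and loses that of V_h^-i, so g and h
   together form a DDM labeling as soon as h labels H by n+1, ..., n+|H| and these two sums agree
   for every i.
   For l C_4, label the i-th cycle n+4i-1, n+4i-2, n+4i-3, n+4i along its arcs: the first two
   vertices get weight 2 and the last two weight -2, and both pairs have label sum 2n+8i-3. So
   all of l C_4 is attached to v_2, which exists because n >= 2l >= 2. *)

lemma sum_fiber_inj_on:
  assumes "inj_on g V"
  shows "(\<Sum>v | v \<in> V \<and> g v = c. g v) = (if c \<in> g ` V then c else 0)"
proof (cases "c \<in> g ` V")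
  case True
  then obtain v where "v \<in> V" "c = g v" by blast
  then have "{v \<in> V. g v = c} = {v}" using assms by (auto dest: inj_onD)
  with \<open>v \<in> V\<close> \<open>c = g v\<close> show ?thesis by simp
next
  case False
  then have "{v \<in> V. g v = c} = {}" by force
  with False show ?thesis by (simp only: sum.empty if_False)
qed

lemma bij_betw_case_sum:
  assumes "bij_betw g A C" and "bij_betw h B D" and "C \<inter> D = {}"
  shows "bij_betw (case_sum g h) (A <+> B) (C \<union> D)"
proof -
  have "bij_betw (case_sum g h) (Inl ` A) C"
    using assms(1) by (auto simp: bij_betw_def inj_on_def image_image)
  moreover have "bij_betw (case_sum g h) (Inr ` B) D"
    using assms(2) by (auto simp: bij_betw_def inj_on_def image_image)
  ultimately show ?thesis
    using assms(3) by (simp add: Plus_def bij_betw_combine)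
qed

lemma wsum_vertices_eq_Plus: "wsum_vertices V VH = V <+> VH"
  by (simp add: wsum_vertices_def Plus_def)

lemma oriented_graph_wsum:
  assumes "oriented_graph V E" and "oriented_graph VH EH" and "\<forall>v\<in>V. g v + s \<noteq> 0"
  shows "oriented_graph (wsum_vertices V VH) (wsum_arcs V E g s VH EH h)"
  unfolding oriented_graph_def
proof (intro conjI allI impI)
  show "finite (wsum_vertices V VH)"
    using assms(1,2) by (simp add: oriented_graph_def wsum_vertices_eq_Plus)
  show "wsum_arcs V E g s VH EH h \<subseteq> wsum_vertices V VH \<times> wsum_vertices V VH"
    using assms(1,2) by (auto simp: oriented_graph_def wsum_vertices_def wsum_arcs_def)
  show "(x, x) \<notin> wsum_arcs V E g s VH EH h" for x
    using assms(1,2) by (auto simp: oriented_graph_def wsum_arcs_def)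
  show "(y, x) \<notin> wsum_arcs V E g s VH EH h" if "(x, y) \<in> wsum_arcs V E g s VH EH h" for x y
    using that assms by (auto simp: oriented_graph_def wsum_arcs_def)
qed

lemma in_nbrs_wsum_Inl:
  assumes "v \<in> V"
  shows "in_nbrs (wsum_vertices V VH) (wsum_arcs V E g s VH EH h) (Inl v)
    = in_nbrs V E v <+> {u \<in> VH. wt VH EH h u = g v + s}"
  using assms by (auto simp: in_nbrs_def wsum_vertices_eq_Plus wsum_arcs_def)

lemma out_nbrs_wsum_Inl:
  assumes "v \<in> V"
  shows "out_nbrs (wsum_vertices V VH) (wsum_arcs V E g s VH EH h) (Inl v)
    = out_nbrs V E v <+> {u \<in> VH. wt VH EH h u = - g v - s}"
  using assms by (auto simp: out_nbrs_def wsum_vertices_eq_Plus wsum_arcs_def)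

lemma in_nbrs_wsum_Inr:
  assumes "u \<in> VH"
  shows "in_nbrs (wsum_vertices V VH) (wsum_arcs V E g s VH EH h) (Inr u)
    = {v \<in> V. wt VH EH h u = - g v - s} <+> in_nbrs VH EH u"
  using assms by (auto simp: in_nbrs_def wsum_vertices_eq_Plus wsum_arcs_def)

lemma out_nbrs_wsum_Inr:
  assumes "u \<in> VH"
  shows "out_nbrs (wsum_vertices V VH) (wsum_arcs V E g s VH EH h) (Inr u)
    = {v \<in> V. wt VH EH h u = g v + s} <+> out_nbrs VH EH u"
  using assms by (auto simp: out_nbrs_def wsum_vertices_eq_Plus wsum_arcs_def)

lemma wt_wsum_Inl:
  assumes "finite V" and "finite VH" and "v \<in> V"
  shows "wt (wsum_vertices V VH) (wsum_arcs V E g s VH EH h) (case_sum g h) (Inl v)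
    = wt V E g v + (\<Sum>u | u \<in> VH \<and> wt VH EH h u = g v + s. h u)
        - (\<Sum>u | u \<in> VH \<and> wt VH EH h u = - g v - s. h u)"
proof -
  have "finite (in_nbrs V E v)" "finite (out_nbrs V E v)"
    using assms(1) by (simp_all add: in_nbrs_def out_nbrs_def)
  then show ?thesis
    using assms(2) unfolding wt_def[of "wsum_vertices V VH"]
      in_nbrs_wsum_Inl[OF assms(3)] out_nbrs_wsum_Inl[OF assms(3)]
    by (simp add: sum.Plus wt_def)
qed

lemma wt_wsum_Inr:
  assumes "finite V" and "finite VH" and "u \<in> VH"
  shows "wt (wsum_vertices V VH) (wsum_arcs V E g s VH EH h) (case_sum g h) (Inr u)
    = wt VH EH h u + (\<Sum>v | v \<in> V \<and> wt VH EH h u = - g v - s. g v)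
        - (\<Sum>v | v \<in> V \<and> wt VH EH h u = g v + s. g v)"
proof -
  have "finite (in_nbrs VH EH u)" "finite (out_nbrs VH EH u)"
    using assms(2) by (simp_all add: in_nbrs_def out_nbrs_def)
  then show ?thesis
    using assms(1) unfolding wt_def[of "wsum_vertices V VH"]
      in_nbrs_wsum_Inr[OF assms(3)] out_nbrs_wsum_Inr[OF assms(3)]
    by (simp add: sum.Plus wt_def)
qed

theorem DDMOG_wsum:
  assumes G: "oriented_graph V E" "DDM_labeling V E g"
    and H: "oriented_graph VH EH"
    and defined: "weighted_sum_defined V g 0 VH EH h"
    and h_bij: "bij_betw h VH {int (card V) + 1..int (card V + card VH)}"
    and balanced: "\<And>i. 1 \<le> i \<Longrightarrow> i \<le> int (card V) \<Longrightarrow>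
      (\<Sum>u | u \<in> VH \<and> wt VH EH h u = i. h u) = (\<Sum>u | u \<in> VH \<and> wt VH EH h u = - i. h u)"
  shows "DDMOG (wsum_vertices V VH) (wsum_arcs V E g 0 VH EH h)"
proof -
  let ?W = "wsum_vertices V VH" and ?A = "wsum_arcs V E g 0 VH EH h" and ?n = "int (card V)"
  have fin: "finite V" "finite VH"
    using G(1) H by (simp_all add: oriented_graph_def)
  have g_bij: "bij_betw g V {1..?n}" and g_wt: "\<And>v. v \<in> V \<Longrightarrow> wt V E g v = 0"
    using G(2) by (simp_all add: DDM_labeling_def)
  then have g_range: "g ` V = {1..?n}" and g_inj: "inj_on g V"
    by (simp_all add: bij_betw_def)
  have wt_range: "\<bar>wt VH EH h u\<bar> \<le> ?n" if "u \<in> VH" for u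
    using defined that by (auto simp: weighted_sum_defined_def)
  have "oriented_graph ?W ?A"
    using G(1) H g_range by (intro oriented_graph_wsum) force+
  moreover have "bij_betw (case_sum g h) ?W {1..int (card ?W)}"
  proof -
    have "{1..?n} \<union> {?n + 1..int (card V + card VH)} = {1..int (card ?W)}"
      using fin by (auto simp: wsum_vertices_eq_Plus card_Plus)
    then show ?thesis
      using bij_betw_case_sum[OF g_bij h_bij] by (simp add: wsum_vertices_eq_Plus)
  qed
  moreover have "wt ?W ?A (case_sum g h) x = 0" if "x \<in> ?W" for x
  proof (cases x)
    case (Inl v)
    with that have "v \<in> V" by (auto simp: wsum_vertices_eq_Plus)
    with g_range have "1 \<le> g v" "g v \<le> ?n" by auto
    with Inl \<open>v \<in> V\<close> show ?thesis
      by (simp add: wt_wsum_Inl fin g_wt balanced)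
  next
    case (Inr u)
    with that have "u \<in> VH" by (auto simp: wsum_vertices_eq_Plus)
    define w where "w = wt VH EH h u"
    have "{v \<in> V. w = - g v - 0} = {v \<in> V. g v = - w}" "{v \<in> V. w = g v + 0} = {v \<in> V. g v = w}"
      by auto
    then have "wt ?W ?A (case_sum g h) x = w + (if - w \<in> g ` V then - w else 0) - (if w \<in> g ` V then w else 0)"
      unfolding Inr wt_wsum_Inr[OF fin \<open>u \<in> VH\<close>] w_def[symmetric]
      by (simp only: sum_fiber_inj_on[OF g_inj])
    moreover have "\<bar>w\<bar> \<le> ?n"
      using wt_range[OF \<open>u \<in> VH\<close>] by (simp add: w_def)
    ultimately show ?thesis
      by (auto simp: g_range)
  qed
  ultimately show ?thesis
    unfolding DDMOG_def DDM_labeling_def by blast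
qed

lemma C4s_vertices_iff: "(i, j) \<in> C4s_vertices l \<longleftrightarrow> i \<in> {1..l} \<and> j \<in> {1, 2, 3, 4}"
  by (auto simp: C4s_vertices_def)

lemma C4s_arcs_iff:
  "((i, j), (i', j')) \<in> C4s_arcs l \<longleftrightarrow> (i, j) \<in> C4s_vertices l \<and> i' = i \<and> j' = j mod 4 + 1"
  by (auto simp: C4s_arcs_def C4s_vertices_def)

lemma card_C4s_vertices: "card (C4s_vertices l) = 4 * l"
  by (simp add: C4s_vertices_def card_cartesian_product)

lemma oriented_graph_C4s: "oriented_graph (C4s_vertices l) (C4s_arcs l)"
proof -
  have "finite (C4s_vertices l)"
    by (simp add: C4s_vertices_def)
  then show ?thesis
    by (auto simp: oriented_graph_def C4s_arcs_iff C4s_vertices_iff split_paired_all)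
qed

lemma in_nbrs_C4s:
  assumes "(i, j) \<in> C4s_vertices l"
  shows "in_nbrs (C4s_vertices l) (C4s_arcs l) (i, j) = {(i, (j + 2) mod 4 + 1)}"
  using assms by (auto simp: in_nbrs_def C4s_arcs_iff C4s_vertices_iff)

lemma out_nbrs_C4s:
  assumes "(i, j) \<in> C4s_vertices l"
  shows "out_nbrs (C4s_vertices l) (C4s_arcs l) (i, j) = {(i, j mod 4 + 1)}"
  using assms by (auto simp: out_nbrs_def C4s_arcs_iff C4s_vertices_iff)

definition C4s_label :: "nat \<Rightarrow> nat \<times> nat \<Rightarrow> int" where
  "C4s_label n = (\<lambda>(i, j). int n + 4 * int i - int (j mod 4))"

lemma wt_C4s_label:
  assumes "(i, j) \<in> C4s_vertices l"
  shows "wt (C4s_vertices l) (C4s_arcs l) (C4s_label n) (i, j) = (if j \<le> 2 then 2 else - 2)"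
proof -
  from assms have "j \<in> {1, 2, 3, 4}" by (simp add: C4s_vertices_iff)
  then show ?thesis
    using assms by (auto simp: wt_def in_nbrs_C4s out_nbrs_C4s C4s_label_def)
qed

lemma bij_betw_C4s_label: "bij_betw (C4s_label n) (C4s_vertices l) {int n + 1..int (n + 4 * l)}"
proof -
  have "inj_on (C4s_label n) (C4s_vertices l)"
  proof (rule inj_onI, clarify)
    fix i j i' j'
    assume "(i, j) \<in> C4s_vertices l" "(i', j') \<in> C4s_vertices l"
      and "C4s_label n (i, j) = C4s_label n (i', j')"
    then have eq: "4 * (int i - int i') = int (j mod 4) - int (j' mod 4)"
      by (simp add: C4s_label_def algebra_simps)
    have cancel: "x = y" if "4 * (x - y) = a - b" "0 \<le> a" "a < 4" "0 \<le> b" "b < 4" for x y a b :: int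
      using that by presburger
    have "int i = int i'"
      by (rule cancel[OF eq]) simp_all
    with eq have "i = i'" "j mod 4 = j' mod 4"
      by simp_all
    with \<open>(i, j) \<in> C4s_vertices l\<close> \<open>(i', j') \<in> C4s_vertices l\<close> show "i = i' \<and> j = j'"
      by (auto simp: C4s_vertices_iff)
  qed
  moreover have "C4s_label n ` C4s_vertices l \<subseteq> {int n + 1..int (n + 4 * l)}"
  proof clarify
    fix i j assume "(i, j) \<in> C4s_vertices l"
    moreover have "j mod 4 < 4"
      by simp
    ultimately show "C4s_label n (i, j) \<in> {int n + 1..int (n + 4 * l)}"
      by (auto simp: C4s_label_def C4s_vertices_iff)
  qed
  moreover have "card {int n + 1..int (n + 4 * l)} = card (C4s_vertices l)"
    by (simp add: card_C4s_vertices)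
  ultimately show ?thesis
    by (metis bij_betw_def card_image card_subset_eq finite_atLeastAtMost_int)
qed

lemma C4s_label_balanced:
  "(\<Sum>u | u \<in> C4s_vertices l \<and> wt (C4s_vertices l) (C4s_arcs l) (C4s_label n) u = c. C4s_label n u)
   = (\<Sum>u | u \<in> C4s_vertices l \<and> wt (C4s_vertices l) (C4s_arcs l) (C4s_label n) u = - c. C4s_label n u)"
proof -
  have level: "{u \<in> C4s_vertices l. wt (C4s_vertices l) (C4s_arcs l) (C4s_label n) u = c}
    = (if c = 2 then {1..l} \<times> {1, 2} else if c = - 2 then {1..l} \<times> {3, 4} else {})" for c
    by (auto simp: wt_C4s_label C4s_vertices_iff split_paired_all)
  have "sum (C4s_label n) ({1..l} \<times> {1, 2}) = sum (C4s_label n) ({1..l} \<times> {3, 4})"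
    by (simp add: C4s_label_def sum.cartesian_product[symmetric] algebra_simps)
  then show ?thesis
    by (simp add: level)
qed

theorem corollary2:
  fixes V :: "'a set" and E :: "('a \<times> 'a) set" and g :: "'a \<Rightarrow> int" and n :: nat
  assumes "oriented_graph V E"
    and "card V = n"
    and "DDM_labeling V E g"
  shows "\<forall>l::nat. 1 \<le> l \<and> 2 * l \<le> n \<longrightarrow>
           (\<exists>h :: nat \<times> nat \<Rightarrow> int.
              weighted_sum_defined V g 0 (C4s_vertices l) (C4s_arcs l) h \<and>
              DDMOG (wsum_vertices V (C4s_vertices l))
                    (wsum_arcs V E g 0 (C4s_vertices l) (C4s_arcs l) h))"
proof (intro allI impI)
  fix l :: nat
  assume l: "1 \<le> l \<and> 2 * l \<le> n"
  have h_bij: "bij_betw (C4s_label n) (C4s_vertices l)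
      {int (card V) + 1..int (card V + card (C4s_vertices l))}"
    using bij_betw_C4s_label by (simp add: assms(2) card_C4s_vertices)
  have defined: "weighted_sum_defined V g 0 (C4s_vertices l) (C4s_arcs l) (C4s_label n)"
    unfolding weighted_sum_defined_def
  proof (intro conjI ballI)
    show "bij_betw g V {1..int (card V)}"
      using assms(3) by (simp add: DDM_labeling_def)
    show "C4s_label n u > 0" if "u \<in> C4s_vertices l" for u
      using bij_betw_apply[OF h_bij that] by simp
    show "\<bar>wt (C4s_vertices l) (C4s_arcs l) (C4s_label n) u\<bar>
        \<in> {0} \<union> {i + 0 |i. 1 \<le> i \<and> i \<le> int (card V)}" if "u \<in> C4s_vertices l" for u
      using that l assms(2) by (cases u) (simp add: wt_C4s_label)
  qed
  then show "\<exists>h. weighted_sum_defined V g 0 (C4s_vertices l) (C4s_arcs l) h \<and>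
      DDMOG (wsum_vertices V (C4s_vertices l)) (wsum_arcs V E g 0 (C4s_vertices l) (C4s_arcs l) h)"
    using DDMOG_wsum[OF assms(1,3) oriented_graph_C4s defined h_bij C4s_label_balanced] by blast
qed

end
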